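(* Fix integers $q\ge 1$ and $k\ge 3$, and let $G(q,k)$ be the graph on vertex set $\{v_0,v_1,\ldots,v_{kq}\}$ in which, with all indices taken modulo $kq+1$, the neighbourhood of $v_i$ is $$\{v_{i-1},v_{i+1}\}\cup\{v_{i+kj+m} : m=2,3,\ldots,k-1,\ j=0,1,\ldots,q-1\}.$$ Then $G(q,k)$ is $(k+1)$-vertex-critical.
   Context: $\chi(G)$ denotes the chromatic number of $G$. A graph $G$ is $t$-vertex-critical if $\chi(G)=t$ and $\chi(G-v)<t$ for every vertex $v$ of $G$. *)

theory Defs
  imports Main
begin

text \<open>A (simple) graph is given by a vertex set V and an adjacency predicate E
  (only its restriction to V matters).\<close>

definition colorable :: "'a set \<Rightarrow> ('a \<Rightarrow> 'a \<Rightarrow> bool) \<Rightarrow> nat \<Rightarrow> bool" where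
  "colorable V E c \<longleftrightarrow>
     (\<exists>f::'a \<Rightarrow> nat. (\<forall>v\<in>V. f v < c) \<and> (\<forall>u\<in>V. \<forall>v\<in>V. E u v \<longrightarrow> f u \<noteq> f v))"

definition chromatic_number :: "'a set \<Rightarrow> ('a \<Rightarrow> 'a \<Rightarrow> bool) \<Rightarrow> nat" where
  "chromatic_number V E = (LEAST c. colorable V E c)"

definition vertex_critical :: "'a set \<Rightarrow> ('a \<Rightarrow> 'a \<Rightarrow> bool) \<Rightarrow> nat \<Rightarrow> bool" where
  "vertex_critical V E t \<longleftrightarrow>
     chromatic_number V E = t \<and> (\<forall>v\<in>V. chromatic_number (V - {v}) E < t)"

text \<open>The graph G(q,k): vertex v_i is represented by i \<in> {0..k*q}; indices mod k*q+1.
  v_j is adjacent to v_i iff j = i \<plusminus> 1 or j = i + k*jj + m (mod kq+1) with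
  2 \<le> m \<le> k-1 and jj < q.\<close>
definition Gqk_adj :: "nat \<Rightarrow> nat \<Rightarrow> nat \<Rightarrow> nat \<Rightarrow> bool" where
  "Gqk_adj q k i j \<longleftrightarrow>
     (let n = k * q + 1 in
        j = (i + 1) mod n \<or> i = (j + 1) mod n \<or>
        (\<exists>m\<in>{2..k-1}. \<exists>jj<q. j = (i + k * jj + m) mod n))"

end

theory Submission
  imports Defs "HOL-Number_Theory.Cong"
begin

(*
  Vertices at cyclic distance less than k are adjacent (via the offsets 1 and 2, ..., k-1), so a
  colour class is a set of points on a cycle of length kq+1 at pairwise cyclic distance at least k,
  and has at most q elements; hence k colours do not suffice for kq+1 vertices.
  Conversely, deleting v_w leaves the path v_(w+1), ..., v_(w+kq), and colouring v_(w+i) by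
  i mod k is proper: an edge joins vertices whose indices differ by d = 1, -1 or kj+m
  (2 <= m <= k-1) modulo kq+1, so their positions on the path differ by d or d - (kq+1), and
  neither is divisible by k within the range of possible differences. Reinserting v_w with a
  new colour gives a (k+1)-colouring of G(q,k).
*)
lemma chromatic_number_eqI:
  assumes "colorable V E c" and "\<And>c'. colorable V E c' \<Longrightarrow> c \<le> c'"
  shows "chromatic_number V E = c"
  unfolding chromatic_number_def using assms by (rule Least_equality)

lemma chromatic_number_le:
  assumes "colorable V E c"
  shows "chromatic_number V E \<le> c"
  unfolding chromatic_number_def using assms by (rule Least_le)

lemma colorable_insert_vertex:
  assumes "colorable (V - {v}) E c" and "\<not> E v v"
  shows "colorable V E (Suc c)"
proof -
  obtain f where f: "\<forall>u\<in>V - {v}. f u < c" "\<forall>u\<in>V - {v}. \<forall>w\<in>V - {v}. E u w \<longrightarrow> f u \<noteq> f w"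
    using assms(1) unfolding colorable_def by blast
  let ?g = "f(v := c)"
  have "\<forall>u\<in>V. ?g u < Suc c" using f(1) by (simp add: less_SucI)
  moreover have "?g u \<noteq> ?g w" if "u \<in> V" "w \<in> V" "E u w" for u w
  proof (cases "u = v \<or> w = v")
    case True
    with assms(2) that have "u \<noteq> w" by auto
    with True that f(1) show ?thesis by auto
  next
    case False
    with that f(2) show ?thesis by simp
  qed
  ultimately show ?thesis unfolding colorable_def by blast
qed

lemma colorable_card_le:
  assumes "colorable V E c"
    and "\<And>S. S \<subseteq> V \<Longrightarrow> \<forall>u\<in>S. \<forall>v\<in>S. \<not> E u v \<Longrightarrow> card S \<le> \<alpha>"
  shows "card V \<le> c * \<alpha>"
proof -
  obtain f where f: "\<forall>v\<in>V. f v < c" "\<forall>u\<in>V. \<forall>v\<in>V. E u v \<longrightarrow> f u \<noteq> f v"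
    using assms(1) unfolding colorable_def by blast
  define colour_class where "colour_class a = {v\<in>V. f v = a}" for a
  have "V = (\<Union>a<c. colour_class a)" using f(1) unfolding colour_class_def by auto
  then have "card V \<le> (\<Sum>a<c. card (colour_class a))" by (metis card_UN_le finite_lessThan)
  also have "\<dots> \<le> (\<Sum>a<c. \<alpha>)"
  proof (intro sum_mono assms(2))
    fix a
    show "colour_class a \<subseteq> V" by (auto simp: colour_class_def)
    show "\<forall>u\<in>colour_class a. \<forall>v\<in>colour_class a. \<not> E u v"
      using f(2) unfolding colour_class_def by blast
  qed
  finally show ?thesis by simp
qed

lemma card_le_div_if_cyclically_separated:
  fixes S :: "nat set"
  assumes "S \<subseteq> {..<n}" and "0 < k" and "k \<le> n"
    and sep: "\<And>x y. x \<in> S \<Longrightarrow> y \<in> S \<Longrightarrow> x < y \<Longrightarrow> x + k \<le> y \<and> y + k \<le> x + n"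
  shows "card S \<le> n div k"
proof (cases "S = {}")
  case False
  have fin: "finite S" using assms(1) finite_subset by blast
  define a where "a = Min S"
  have a: "a \<in> S" "\<And>x. x \<in> S \<Longrightarrow> a \<le> x" using fin False by (auto simp: a_def)
  have span: "x - a \<le> n - k" if "x \<in> S" for x
    using sep[OF a(1) that] a(2)[OF that] \<open>k \<le> n\<close> by (cases "a < x") auto
  define g where "g x = (x - a) div k" for x
  have "inj_on g S"
  proof (rule linorder_inj_onI')
    fix x y assume "x \<in> S" "y \<in> S" "x < y"
    then have "(x - a) + k \<le> y - a" using sep a(2) by fastforce
    then have "(x - a) div k + 1 \<le> (y - a) div k"
      using div_le_mono[of "(x - a) + k" "y - a" k] \<open>0 < k\<close> by (simp add: div_add_self2)
    then show "g x \<noteq> g y" by (simp add: g_def)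
  qed
  moreover have "g x \<le> (n - k) div k" if "x \<in> S" for x
    unfolding g_def using span[OF that] by (rule div_le_mono)
  then have "g ` S \<subseteq> {..(n - k) div k}" by auto
  ultimately have "card S \<le> card {..(n - k) div k}"
    by (intro card_inj_on_le) auto
  also have "\<dots> = Suc ((n - k) div k)" by simp
  also have "\<dots> = n div k" using \<open>0 < k\<close> \<open>k \<le> n\<close> by (simp add: le_div_geq)
  finally show ?thesis .
qed simp

lemma Gqk_adj_short:
  assumes "q \<ge> 1" and "0 < d" and "d < k"
  shows "Gqk_adj q k x ((x + d) mod (k * q + 1))"
proof (cases "d = 1")
  case False
  then have "d \<in> {2..k-1}" using assms by auto
  then have "\<exists>m\<in>{2..k-1}. \<exists>jj<q. (x + d) mod (k * q + 1) = (x + k * jj + m) mod (k * q + 1)"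
    using \<open>q \<ge> 1\<close> by (intro bexI[of _ d] exI[of _ 0]) auto
  then show ?thesis unfolding Gqk_adj_def Let_def by blast
qed (simp add: Gqk_adj_def)

lemma Gqk_independent_card_le:
  assumes "q \<ge> 1" and "k \<ge> 2" and "S \<subseteq> {0..k*q}"
    and indep: "\<forall>u\<in>S. \<forall>v\<in>S. \<not> Gqk_adj q k u v"
  shows "card S \<le> q"
proof -
  let ?n = "k * q + 1"
  have "x + k \<le> y \<and> y + k \<le> x + ?n" if "x \<in> S" "y \<in> S" "x < y" for x y
  proof (rule ccontr)
    have "y < ?n" using that assms(3) by auto
    assume "\<not> ?thesis"
    then consider "y < x + k" | "x + ?n < y + k" by linarith
    then show False
    proof cases
      case 1
      have "Gqk_adj q k x ((x + (y - x)) mod ?n)"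
        using 1 \<open>x < y\<close> by (intro Gqk_adj_short[OF \<open>q \<ge> 1\<close>]) auto
      then show False using indep that \<open>y < ?n\<close> by auto
    next
      case 2
      have "Gqk_adj q k y ((y + (x + ?n - y)) mod ?n)"
        using 2 \<open>y < ?n\<close> by (intro Gqk_adj_short[OF \<open>q \<ge> 1\<close>]) auto
      moreover have "y + (x + ?n - y) = x + ?n" using \<open>y < ?n\<close> by simp
      moreover have "(x + ?n) mod ?n = x"
        using \<open>x < y\<close> \<open>y < ?n\<close> by (simp only: mod_add_self2) simp
      ultimately show False using indep that by auto
    qed
  qed
  moreover have "k \<le> ?n" using \<open>q \<ge> 1\<close> by (simp add: le_SucI)
  ultimately have "card S \<le> ?n div k"
    using assms(2,3) by (intro card_le_div_if_cyclically_separated) auto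
  also have "\<dots> = q + 1 div k" using \<open>k \<ge> 2\<close> by (intro div_mult_self4) simp
  also have "\<dots> = q" using \<open>k \<ge> 2\<close> by simp
  finally show ?thesis .
qed

lemma Gqk_colorable_imp_gt:
  assumes "q \<ge> 1" and "k \<ge> 2" and "colorable {0..k*q} (Gqk_adj q k) c"
  shows "k < c"
proof -
  have bound: "k * q + 1 \<le> c * q"
    using colorable_card_le[OF assms(3) Gqk_independent_card_le[OF assms(1,2)]] by simp
  show ?thesis
  proof (rule ccontr)
    assume "\<not> k < c"
    then have "c * q \<le> k * q" by simp
    with bound show False by linarith
  qed
qed

definition Gqk_offsets :: "nat \<Rightarrow> nat \<Rightarrow> int set" where
  "Gqk_offsets q k = {1, -1} \<union> {int (k * jj + m) | jj m. jj < q \<and> m \<in> {2..k-1}}"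

lemma Gqk_adj_offset:
  assumes "Gqk_adj q k i j"
  shows "\<exists>d\<in>Gqk_offsets q k. [int j = int i + d] (mod int (k * q + 1))"
proof -
  let ?n = "k * q + 1"
  from assms consider "j = (i + 1) mod ?n" | "i = (j + 1) mod ?n"
    | "\<exists>m\<in>{2..k-1}. \<exists>jj<q. j = (i + k * jj + m) mod ?n"
    unfolding Gqk_adj_def Let_def by blast
  then show ?thesis
  proof cases
    case 1
    then have "[int j = int i + 1] (mod int ?n)" by (simp add: cong_def zmod_int ac_simps)
    then show ?thesis unfolding Gqk_offsets_def by blast
  next
    case 2
    then have "[int i = int j + 1] (mod int ?n)" by (simp add: cong_def zmod_int ac_simps)
    then have "[int j = int i + -1] (mod int ?n)"
      by (simp add: cong_iff_dvd_diff dvd_diff_commute algebra_simps)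
    then show ?thesis unfolding Gqk_offsets_def by blast
  next
    case 3
    then obtain m jj where "m \<in> {2..k-1}" "jj < q" "j = (i + k * jj + m) mod ?n" by blast
    moreover from this have "[int j = int i + int (k * jj + m)] (mod int ?n)"
      by (simp add: cong_def zmod_int add.assoc)
    ultimately show ?thesis unfolding Gqk_offsets_def by blast
  qed
qed

lemma Gqk_offsets_range:
  assumes "d \<in> Gqk_offsets q k" and "q \<ge> 1" and "k \<ge> 2"
  shows "-1 \<le> d \<and> d < int (k * q)"
proof -
  have "k * jj + m < k * q" if "jj < q" "m \<le> k - 1" for jj m
  proof -
    have "k * (jj + 1) \<le> k * q" using that(1) by (intro mult_le_mono2) simp
    then show ?thesis using that(2) \<open>k \<ge> 2\<close> by simp
  qed
  moreover have "2 * 1 \<le> k * q" using \<open>q \<ge> 1\<close> \<open>k \<ge> 2\<close> by (rule mult_le_mono[rotated])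
  ultimately show ?thesis
    using assms(1) unfolding Gqk_offsets_def by (auto simp del: of_nat_add of_nat_mult)
qed

lemma Gqk_offset_not_dvd:
  assumes "k \<ge> 2" and d: "d \<in> Gqk_offsets q k"
    and D: "[D = d] (mod int (k * q + 1))" and D_small: "\<bar>D\<bar> < int (k * q)"
  shows "\<not> int k dvd D"
proof
  assume "int k dvd D"
  have "q \<ge> 1" using D_small by (cases "q = 0") auto
  have d_range: "-1 \<le> d" "d < int (k * q)"
    using Gqk_offsets_range[OF d \<open>q \<ge> 1\<close> \<open>k \<ge> 2\<close>] by auto
  obtain t where t: "D = d + int (k * q + 1) * t"
    using D by (metis cong_iff_lin cong_sym)
  have "t = 0 \<or> t = -1"
  proof (rule ccontr)
    assume "\<not> ?thesis"
    then consider "t \<ge> 1" | "t \<le> -2" by linarith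
    then show False
    proof cases
      case 1
      then have "int (k * q + 1) \<le> int (k * q + 1) * t"
        using mult_left_mono[of 1 t "int (k * q + 1)"] by simp
      then show False using t d_range D_small by linarith
    next
      case 2
      then have "int (k * q + 1) * t \<le> int (k * q + 1) * (-2)" by (intro mult_left_mono) auto
      then show False using t d_range D_small by (simp add: algebra_simps)
    qed
  qed
  \<comment> \<open>since (kq + 1) t = t (mod k)\<close>
  have "D = int k * (int q * t) + (d + t)" using t by (simp add: algebra_simps)
  with \<open>int k dvd D\<close> have "int k dvd d + t" by (metis dvd_add_right_iff dvd_triv_left)
  from d consider "d = 1 \<or> d = -1" | jj m where "d = int k * int jj + int m" "m \<in> {2..k-1}"
    unfolding Gqk_offsets_def by auto
  then show False
  proof cases
    case 1
    show False
    proof (cases "t = 0")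
      case True
      then have "int k dvd 1" using \<open>int k dvd d + t\<close> 1 by auto
      then show False using \<open>k \<ge> 2\<close> zdvd_not_zless[of 1 "int k"] by simp
    next
      case False
      then have "D = d - int (k * q + 1)" using \<open>t = 0 \<or> t = -1\<close> t by simp
      then show False using 1 D_small by auto
    qed
  next
    case (2 jj m)
    then have "int k dvd int m + t" using \<open>int k dvd d + t\<close>
      by (metis add.assoc dvd_add_right_iff dvd_triv_left)
    moreover have "0 < int m + t" "int m + t < int k"
      using \<open>m \<in> {2..k-1}\<close> \<open>t = 0 \<or> t = -1\<close> by auto
    ultimately show False using zdvd_not_zless by blast
  qed
qed

lemma Gqk_adj_irrefl:
  assumes "q \<ge> 1" and "k \<ge> 2"
  shows "\<not> Gqk_adj q k v v"
proof
  assume "Gqk_adj q k v v"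
  then obtain d where d: "d \<in> Gqk_offsets q k" and "[int v = int v + d] (mod int (k * q + 1))"
    using Gqk_adj_offset by blast
  then have "[0 = d] (mod int (k * q + 1))" by (metis cong_add_lcancel_0 cong_sym)
  moreover have "\<bar>0\<bar> < int (k * q)" using assms by simp
  ultimately have "\<not> int k dvd 0" using Gqk_offset_not_dvd[OF \<open>k \<ge> 2\<close> d] by blast
  then show False by simp
qed

lemma Gqk_colorable_minus_vertex:
  assumes "k \<ge> 2" and "w \<le> k * q"
  shows "colorable ({0..k*q} - {w}) (Gqk_adj q k) k"
proof -
  let ?n = "int (k * q + 1)"
  \<comment> \<open>position of x on the path w+1, ..., w+kq (mod kq+1) left after deleting w\<close>
  define pos where "pos x = (int x - int w - 1) mod ?n" for x
  have pos_range: "0 \<le> pos x \<and> pos x < int (k * q)" if "x \<le> k * q" "x \<noteq> w" for x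
  proof -
    have x_le: "int x \<le> int (k * q)" and w_le: "int w \<le> int (k * q)"
      using that(1) \<open>w \<le> k * q\<close> by (simp_all only: of_nat_le_iff)
    show ?thesis
    proof (cases "w < x")
      case True
      then have "pos x = int x - int w - 1"
        unfolding pos_def using True x_le by (intro mod_pos_pos_trivial) auto
      then show ?thesis using True x_le by simp
    next
      case False
      have "pos x = (int x - int w - 1 + ?n) mod ?n" unfolding pos_def by (simp only: mod_add_self2)
      also have "\<dots> = int x - int w - 1 + ?n"
        using False that x_le w_le by (intro mod_pos_pos_trivial) auto
      finally show ?thesis using False that x_le w_le by simp
    qed
  qed
  have pos_cong: "[pos x = int x - int w - 1] (mod ?n)" for x
    by (simp add: pos_def cong_def)
  show ?thesis unfolding colorable_def
  proof (intro exI[of _ "\<lambda>x. nat (pos x mod int k)"] conjI ballI impI)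
    fix x
    show "nat (pos x mod int k) < k" using \<open>k \<ge> 2\<close> by (simp add: nat_less_iff)
  next
    fix u v assume u: "u \<in> {0..k*q} - {w}" and v: "v \<in> {0..k*q} - {w}" and "Gqk_adj q k u v"
    then obtain d where d: "d \<in> Gqk_offsets q k" and uv: "[int v = int u + d] (mod ?n)"
      using Gqk_adj_offset by blast
    have "[pos v - pos u = (int v - int w - 1) - (int u - int w - 1)] (mod ?n)"
      by (rule cong_diff[OF pos_cong pos_cong])
    also have "(int v - int w - 1) - (int u - int w - 1) = int v - int u" by simp
    also have "[int v - int u = d] (mod ?n)"
      using uv by (simp add: cong_iff_dvd_diff algebra_simps)
    finally have "[pos v - pos u = d] (mod ?n)" .
    moreover have "\<bar>pos v - pos u\<bar> < int (k * q)"
      using pos_range[of u] pos_range[of v] u v unfolding abs_less_iff by auto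
    ultimately have "\<not> int k dvd pos v - pos u" using Gqk_offset_not_dvd[OF \<open>k \<ge> 2\<close> d] by blast
    show "nat (pos u mod int k) \<noteq> nat (pos v mod int k)"
    proof
      assume "nat (pos u mod int k) = nat (pos v mod int k)"
      moreover have "0 \<le> pos x mod int k" for x using \<open>k \<ge> 2\<close> by simp
      ultimately have "pos u mod int k = pos v mod int k" by (simp add: eq_nat_nat_iff)
      then have "int k dvd pos u - pos v" by (simp add: mod_eq_dvd_iff)
      then have "int k dvd pos v - pos u" by (simp add: dvd_diff_commute)
      with \<open>\<not> int k dvd pos v - pos u\<close> show False by contradiction
    qed
  qed
qed

theorem lemma2p6:
  fixes q k :: nat
  assumes "q \<ge> 1" and "k \<ge> 3"
  shows "vertex_critical {0..k*q} (Gqk_adj q k) (k + 1)"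
proof -
  have "k \<ge> 2" using \<open>k \<ge> 3\<close> by simp
  have critical: "colorable ({0..k*q} - {v}) (Gqk_adj q k) k" if "v \<in> {0..k*q}" for v
    using that Gqk_colorable_minus_vertex[OF \<open>k \<ge> 2\<close>] by simp
  have "colorable ({0..k*q} - {0}) (Gqk_adj q k) k" using critical by simp
  then have "colorable {0..k*q} (Gqk_adj q k) (Suc k)"
    using Gqk_adj_irrefl[OF \<open>q \<ge> 1\<close> \<open>k \<ge> 2\<close>] by (rule colorable_insert_vertex)
  then have "chromatic_number {0..k*q} (Gqk_adj q k) = k + 1"
    using Gqk_colorable_imp_gt[OF \<open>q \<ge> 1\<close> \<open>k \<ge> 2\<close>]
    by (intro chromatic_number_eqI) (simp_all add: Suc_le_eq)
  moreover have "chromatic_number ({0..k*q} - {v}) (Gqk_adj q k) < k + 1" if "v \<in> {0..k*q}" for v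
    using chromatic_number_le[OF critical[OF that]] by simp
  ultimately show ?thesis unfolding vertex_critical_def by blast
qed

end
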